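(* Let $m\ge 1$, $P,Q\ge 0$ be integers with $N=P+Q\ge1$, let $D$, $F_1,\ldots,F_m$, $\mathcal{E}$, $d$ and $G_F:\mathcal{E}\to\mathcal{E}$ be as described in the context, and assume that the state network of $G_F$ is strongly connected. Then the set of periodic points of $G_F$ is dense in the metric space $(\mathcal{E},d)$; that is, for every $E\in\mathcal{E}$ and every $\varepsilon>0$ there exist $E'\in\mathcal{E}$ and $k\ge1$ with $G_F^k(E')=E'$ and $d(E,E')<\varepsilon$.
   Context: Let $D=\{k\,2^{-Q}: k=0,1,\ldots,2^N-1\}$ be the set of $N$-bit fixed-point numbers; each $x\in D$ is written in binary as $x=x_{P-1}x_{P-2}\ldots x_0.x_{-1}\ldots x_{-Q}$ with digits $x_j\in\{0,1\}$. For $x,y\in D$ let $x\cdot y$, $x+y$ and $\overline{x}$ denote bitwise AND, bitwise OR and bitwise NOT (complement of every one of the $N$ digits), which are again elements of $D$. Let $F_1,\ldots,F_m:D^m\to D$ be arbitrary functions. Let $\Sigma$ be the set of one-sided infinite sequences $w=w^1w^2\ldots$ with $w^k\in D$, and $\sigma:\Sigma\to\Sigma$ the left shift $\sigma(w)=w^2w^3\ldots$. Let $\mathcal{E}=\Sigma^m\times D^m$, with elements $E=((w_1,\ldots,w_m),(x_1,\ldots,x_m))$. Define $G_F:\mathcal{E}\to\mathcal{E}$ by $G_F((w_1,\ldots,w_m),x)=((\sigma(w_1),\ldots,\sigma(w_m)),(H_1,\ldots,H_m))$, where $x=(x_1,\ldots,x_m)$ and $H_i=(x_i\cdot\overline{w_i^1})+(F_i(x)\cdot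 w_i^1)$ (i.e. bit $j$ of $x_i$ is replaced by bit $j$ of $F_i(x)$ exactly when bit $j$ of $w_i^1$ is $1$). The metric on $\mathcal{E}$ is $d(E,\hat E)=\sum_{i=1}^m\sum_{k=1}^\infty \frac{|w_i^k-\hat w_i^k|}{2^{Nk}}+\sqrt{\sum_{i=1}^m (x_i-\hat x_i)^2}$. The state network of $G_F$ is the directed graph whose vertex set is $D^m$, with an edge from $\hat x$ to $\tilde x$ whenever there is some $(w_1,\ldots,w_m)\in\Sigma^m$ such that the $D^m$-component of $G_F((w_1,\ldots,w_m),\hat x)$ equals $\tilde x$. It is strongly connected if every vertex is reachable from every other vertex by a directed path. *)

theory Defs
  imports Complex_Main
begin

definition fxD :: "nat \<Rightarrow> nat \<Rightarrow> real set" where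
  "fxD P Q = {real k / 2 ^ Q | k. k < 2 ^ (P + Q)}"

text \<open>The integer code k of x = k 2^-Q; bit j of x (j = -Q..P-1) is bit (j+Q) of k.\<close>
definition fxcode :: "nat \<Rightarrow> real \<Rightarrow> nat" where
  "fxcode Q x = nat \<lfloor>x * 2 ^ Q\<rfloor>"

definition fxand :: "nat \<Rightarrow> real \<Rightarrow> real \<Rightarrow> real" where
  "fxand Q x y = real (Bit_Operations.and (fxcode Q x) (fxcode Q y)) / 2 ^ Q"

definition fxor :: "nat \<Rightarrow> real \<Rightarrow> real \<Rightarrow> real" where
  "fxor Q x y = real (Bit_Operations.or (fxcode Q x) (fxcode Q y)) / 2 ^ Q"

definition fxnot :: "nat \<Rightarrow> nat \<Rightarrow> real \<Rightarrow> real" where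
  "fxnot P Q x = real (2 ^ (P + Q) - 1 - fxcode Q x) / 2 ^ Q"

text \<open>D^m: tuples indexed by i < m, zero outside (normalisation).\<close>
definition fxDm :: "nat \<Rightarrow> nat \<Rightarrow> nat \<Rightarrow> (nat \<Rightarrow> real) set" where
  "fxDm P Q m = {x. (\<forall>i<m. x i \<in> fxD P Q) \<and> (\<forall>i\<ge>m. x i = 0)}"

text \<open>The phase space \<E> = \<Sigma>^m \<times> D^m. W i k is w_i^(k+1); components i \<ge> m are zero.\<close>
definition phase :: "nat \<Rightarrow> nat \<Rightarrow> nat \<Rightarrow> ((nat \<Rightarrow> nat \<Rightarrow> real) \<times> (nat \<Rightarrow> real)) set" where
  "phase P Q m = {(W, x). (\<forall>i<m. \<forall>k. W i k \<in> fxD P Q) \<and> (\<forall>i\<ge>m. W i = (\<lambda>_. 0))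
                         \<and> x \<in> fxDm P Q m}"

definition GF :: "nat \<Rightarrow> nat \<Rightarrow> nat \<Rightarrow> (nat \<Rightarrow> (nat \<Rightarrow> real) \<Rightarrow> real)
   \<Rightarrow> (nat \<Rightarrow> nat \<Rightarrow> real) \<times> (nat \<Rightarrow> real) \<Rightarrow> (nat \<Rightarrow> nat \<Rightarrow> real) \<times> (nat \<Rightarrow> real)" where
  "GF P Q m F E = (let W = fst E; x = snd E in
     ((\<lambda>i k. W i (Suc k)),
      (\<lambda>i. if i < m then fxor Q (fxand Q (x i) (fxnot P Q (W i 0))) (fxand Q (F i x) (W i 0))
           else 0)))"

definition dE :: "nat \<Rightarrow> nat \<Rightarrow> nat \<Rightarrow> (nat \<Rightarrow> nat \<Rightarrow> real) \<times> (nat \<Rightarrow> real)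
   \<Rightarrow> (nat \<Rightarrow> nat \<Rightarrow> real) \<times> (nat \<Rightarrow> real) \<Rightarrow> real" where
  "dE P Q m E E' =
     (\<Sum>i<m. \<Sum>k. \<bar>fst E i k - fst E' i k\<bar> / 2 ^ ((P + Q) * Suc k))
     + sqrt (\<Sum>i<m. (snd E i - snd E' i)\<^sup>2)"

definition state_edges :: "nat \<Rightarrow> nat \<Rightarrow> nat \<Rightarrow> (nat \<Rightarrow> (nat \<Rightarrow> real) \<Rightarrow> real)
   \<Rightarrow> ((nat \<Rightarrow> real) \<times> (nat \<Rightarrow> real)) set" where
  "state_edges P Q m F = {(a, b). a \<in> fxDm P Q m \<and> b \<in> fxDm P Q m \<and>
      (\<exists>W. (W, a) \<in> phase P Q m \<and> snd (GF P Q m F (W, a)) = b)}"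

definition strongly_connected_sn :: "nat \<Rightarrow> nat \<Rightarrow> nat \<Rightarrow> (nat \<Rightarrow> (nat \<Rightarrow> real) \<Rightarrow> real) \<Rightarrow> bool" where
  "strongly_connected_sn P Q m F =
     (\<forall>a\<in>fxDm P Q m. \<forall>b\<in>fxDm P Q m. (a, b) \<in> (state_edges P Q m F)\<^sup>*)"

end

theory Submission
  imports Defs
begin

text \<open>
  An orbit segment of \<open>G_F\<close> is determined by the initial state and the finitely many strategy
  terms it reads. Given \<open>E = (W, x)\<close> and a prefix length \<open>n\<close>, run the first \<open>n\<close> terms of \<open>W\<close>
  from \<open>x\<close> to some state \<open>y\<close>; strong connectivity yields a finite word of strategy terms
  steering \<open>y\<close> back to \<open>x\<close>. Repeating the concatenated word periodically gives a periodic
  point \<open>(W', x)\<close>, and since \<open>W'\<close> agrees with \<open>W\<close> on the first \<open>n\<close> terms, its distance to \<open>E\<close>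
  is at most the tail of a geometric series, \<open>m 2^P 2^-n\<close>.
\<close>

lemma and_nat_less_power2: "(y::nat) < 2 ^ n \<Longrightarrow> Bit_Operations.and x y < 2 ^ n"
proof -
  assume "y < 2 ^ n"
  have "int (Bit_Operations.and x y) = Bit_Operations.and (int x) (int y)" by (rule of_nat_and_eq)
  also have "\<dots> \<le> int y" by (rule AND_upper2) simp
  finally show ?thesis using \<open>y < 2 ^ n\<close> by simp
qed

lemma or_nat_less_power2:
  assumes "(x::nat) < 2 ^ n" "y < 2 ^ n"
  shows "Bit_Operations.or x y < 2 ^ n"
proof -
  have "take_bit n (Bit_Operations.or x y) = Bit_Operations.or (take_bit n x) (take_bit n y)"
    by (rule take_bit_or)
  also have "\<dots> = Bit_Operations.or x y" using assms by (simp add: take_bit_nat_eq_self)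
  finally show ?thesis by (simp only: take_bit_nat_eq_self_iff)
qed


lemma fxcode_of_nat_div: "fxcode Q (real k / 2 ^ Q) = k"
  by (simp add: fxcode_def)

lemma fxcode_less_if_fxD: "v \<in> fxD P Q \<Longrightarrow> fxcode Q v < 2 ^ (P + Q)"
  by (auto simp: fxD_def fxcode_of_nat_div)

lemma fxD_bounds:
  assumes "v \<in> fxD P Q"
  shows "0 \<le> v" "v \<le> 2 ^ P"
proof -
  obtain k where k: "v = real k / 2 ^ Q" "k < 2 ^ (P + Q)" using assms by (auto simp: fxD_def)
  have "real k \<le> 2 ^ P * 2 ^ Q"
    using k(2) by (metis less_imp_le of_nat_le_iff of_nat_numeral of_nat_power power_add)
  then show "v \<le> 2 ^ P" using k(1) by (simp add: divide_le_eq)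
  show "0 \<le> v" using k(1) by simp
qed

lemma fxor_fxand_in_fxD:
  assumes "fxcode Q a < 2 ^ (P + Q)" "fxcode Q d < 2 ^ (P + Q)"
  shows "fxor Q (fxand Q a b) (fxand Q c d) \<in> fxD P Q"
proof -
  have "fxcode Q (fxand Q a b) < 2 ^ (P + Q)"
    unfolding fxand_def fxcode_of_nat_div using and_nat_less_power2[OF assms(1), of "fxcode Q b"]
    by (simp add: and.commute)
  moreover have "fxcode Q (fxand Q c d) < 2 ^ (P + Q)"
    unfolding fxand_def fxcode_of_nat_div using and_nat_less_power2[OF assms(2), of "fxcode Q c"] by simp
  ultimately show ?thesis
    unfolding fxor_def fxD_def using or_nat_less_power2 by blast
qed


text \<open>\<open>C t i\<close> is the strategy term \<open>w_i\<close> read at step \<open>t\<close>.\<close>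
primrec state_run :: "nat \<Rightarrow> nat \<Rightarrow> nat \<Rightarrow> (nat \<Rightarrow> (nat \<Rightarrow> real) \<Rightarrow> real)
    \<Rightarrow> (nat \<Rightarrow> nat \<Rightarrow> real) \<Rightarrow> nat \<Rightarrow> (nat \<Rightarrow> real) \<Rightarrow> (nat \<Rightarrow> real)" where
  "state_run P Q m F C 0 y = y"
| "state_run P Q m F C (Suc j) y =
     snd (GF P Q m F ((\<lambda>i k. C j i), state_run P Q m F C j y))"

lemma GF_Pair: "GF P Q m F (W, x) = ((\<lambda>i k. W i (Suc k)),
   (\<lambda>i. if i < m then fxor Q (fxand Q (x i) (fxnot P Q (W i 0))) (fxand Q (F i x) (W i 0))
        else 0))"
  by (simp add: GF_def)

lemma funpow_GF:
  "(GF P Q m F ^^ k) (W, x) = ((\<lambda>i j. W i (j + k)), state_run P Q m F (\<lambda>t i. W i t) k x)"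
proof (induction k)
  case (Suc k)
  have "(GF P Q m F ^^ Suc k) (W, x)
      = GF P Q m F ((\<lambda>i j. W i (j + k)), state_run P Q m F (\<lambda>t i. W i t) k x)"
    by (simp only: funpow.simps comp_def Suc.IH)
  then show ?case unfolding GF_Pair state_run.simps by (simp add: fun_eq_iff)
qed simp

lemma state_run_cong:
  "(\<And>t. t < j \<Longrightarrow> C t = C' t) \<Longrightarrow> state_run P Q m F C j y = state_run P Q m F C' j y"
  by (induction j) auto

lemma state_run_add:
  "state_run P Q m F C (n + j) y = state_run P Q m F (\<lambda>t. C (n + t)) j (state_run P Q m F C n y)"
  by (induction j) auto

lemma state_run_in_fxDm:
  assumes F: "\<forall>i<m. \<forall>x\<in>fxDm P Q m. F i x \<in> fxD P Q"
    and y: "y \<in> fxDm P Q m" and C: "\<forall>t<j. \<forall>i<m. C t i \<in> fxD P Q"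
  shows "state_run P Q m F C j y \<in> fxDm P Q m"
  using C
proof (induction j)
  case (Suc j)
  let ?z = "state_run P Q m F C j y"
  have z: "?z \<in> fxDm P Q m" using Suc by simp
  have "fxor Q (fxand Q (?z i) (fxnot P Q (C j i))) (fxand Q (F i ?z) (C j i)) \<in> fxD P Q"
    if "i < m" for i
    using z Suc.prems F that
    by (intro fxor_fxand_in_fxD) (auto simp: fxDm_def fxnot_def fxcode_of_nat_div
        intro: fxcode_less_if_fxD)
  then show ?case by (auto simp: GF_def Let_def fxDm_def)
qed (simp add: y)

definition valid_strategy_word :: "nat \<Rightarrow> nat \<Rightarrow> nat \<Rightarrow> nat \<Rightarrow> (nat \<Rightarrow> nat \<Rightarrow> real) \<Rightarrow> bool" where
  "valid_strategy_word P Q m L C \<longleftrightarrow>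
     (\<forall>t<L. (\<forall>i<m. C t i \<in> fxD P Q) \<and> (\<forall>i\<ge>m. C t i = 0))"

lemma rtrancl_state_edges_imp_state_run:
  assumes "(a, b) \<in> (state_edges P Q m F)\<^sup>*"
  shows "\<exists>L C. valid_strategy_word P Q m L C \<and> state_run P Q m F C L a = b"
  using assms
proof (induction rule: rtrancl_induct)
  case base
  show ?case by (rule exI[of _ 0]) (auto simp: valid_strategy_word_def)
next
  case (step b c)
  obtain L C where C: "valid_strategy_word P Q m L C" and run: "state_run P Q m F C L a = b"
    using step.IH by blast
  obtain W where W: "(W, b) \<in> phase P Q m" "snd (GF P Q m F (W, b)) = c"
    using step.hyps(2) by (auto simp: state_edges_def)
  define C' where "C' = C(L := (\<lambda>i. W i 0))"
  have "state_run P Q m F C' L a = b" using run state_run_cong[of L C' C] by (simp add: C'_def)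
  then have "state_run P Q m F C' (Suc L) a = c" using W(2) by (simp add: C'_def GF_def Let_def)
  moreover have "valid_strategy_word P Q m (Suc L) C'"
    using C W(1) by (auto simp: valid_strategy_word_def C'_def phase_def less_Suc_eq)
  ultimately show ?case by blast
qed


lemma periodic_point_with_prefix:
  assumes F: "\<forall>i<m. \<forall>x\<in>fxDm P Q m. F i x \<in> fxD P Q"
    and conn: "strongly_connected_sn P Q m F"
    and E: "(W, x) \<in> phase P Q m" and "0 < n"
  shows "\<exists>W'. \<exists>T\<ge>1. (W', x) \<in> phase P Q m \<and> (GF P Q m F ^^ T) (W', x) = (W', x)
           \<and> (\<forall>i k. k < n \<longrightarrow> W' i k = W i k)"
proof -
  have W: "\<forall>i<m. \<forall>k. W i k \<in> fxD P Q" "\<forall>i\<ge>m. W i = (\<lambda>_. 0)" and x: "x \<in> fxDm P Q m"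
    using E by (auto simp: phase_def)
  define y where "y = state_run P Q m F (\<lambda>t i. W i t) n x"
  have "y \<in> fxDm P Q m"
    unfolding y_def using W by (intro state_run_in_fxDm[OF F x]) auto
  then have "(y, x) \<in> (state_edges P Q m F)\<^sup>*"
    using conn x by (auto simp: strongly_connected_sn_def)
  then obtain L Cs where Cs: "valid_strategy_word P Q m L Cs"
    and return: "state_run P Q m F Cs L y = x"
    using rtrancl_state_edges_imp_state_run by blast
  define C where "C = (\<lambda>t. if t < n then (\<lambda>i. W i t) else Cs (t - n))"
  define T where "T = n + L"
  define W' where "W' = (\<lambda>i k. C (k mod T) i)"
  have "T \<ge> 1" using \<open>0 < n\<close> by (simp add: T_def)
  have "valid_strategy_word P Q m T C"
    using Cs W by (auto simp: valid_strategy_word_def C_def T_def)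
  then have "(W', x) \<in> phase P Q m"
    using \<open>T \<ge> 1\<close> x by (auto simp: phase_def W'_def valid_strategy_word_def)
  moreover have "(GF P Q m F ^^ T) (W', x) = (W', x)"
  proof -
    have "state_run P Q m F (\<lambda>t i. W' i t) T x = state_run P Q m F C T x"
      by (rule state_run_cong) (auto simp: W'_def)
    also have "\<dots> = state_run P Q m F (\<lambda>t. C (n + t)) L (state_run P Q m F C n x)"
      unfolding T_def by (rule state_run_add)
    also have "state_run P Q m F C n x = y"
      unfolding y_def by (rule state_run_cong) (auto simp: C_def)
    also have "(\<lambda>t. C (n + t)) = Cs" by (auto simp: C_def)
    finally have "state_run P Q m F (\<lambda>t i. W' i t) T x = x" using return by simp
    moreover have "(\<lambda>i j. W' i (j + T)) = W'" by (simp add: W'_def)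
    ultimately show ?thesis unfolding funpow_GF by simp
  qed
  moreover have "\<forall>i k. k < n \<longrightarrow> W' i k = W i k"
    by (simp add: W'_def C_def T_def)
  ultimately show ?thesis using \<open>T \<ge> 1\<close> by blast
qed


lemma suminf_le_geometric_tail:
  fixes g :: "nat \<Rightarrow> real"
  assumes "\<And>k. k < n \<Longrightarrow> g k = 0" and "\<And>k. 0 \<le> g k" and "\<And>k. g k \<le> B * (1/2) ^ Suc k"
  shows "suminf g \<le> B * (1/2) ^ n"
proof -
  let ?tail = "\<lambda>c k. c * (1/2::real) ^ Suc k"
  have tail_sums: "?tail c sums c" for c
    using sums_mult[OF power_half_series, of c] by simp
  have "summable g"
  proof (rule summable_comparison_test'[OF sums_summable[OF tail_sums[of B]]])
    show "norm (g k) \<le> ?tail B k" for k using assms(2,3)[of k] by simp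
  qed
  then have "suminf g = (\<Sum>k. g (k + n))"
    using suminf_split_initial_segment[of g n] assms(1) by simp
  also have "\<dots> \<le> (\<Sum>k. ?tail (B * (1/2) ^ n) k)"
  proof (rule suminf_le)
    show "g (k + n) \<le> ?tail (B * (1/2) ^ n) k" for k
      using assms(3)[of "k + n"] by (simp add: power_add mult_ac)
    show "summable (\<lambda>k. g (k + n))" using \<open>summable g\<close> by simp
  qed (rule sums_summable[OF tail_sums])
  also have "\<dots> = B * (1/2) ^ n"
    using tail_sums by (rule sums_unique[symmetric])
  finally show ?thesis .
qed

lemma dE_le_if_prefix_agrees:
  assumes "P + Q \<ge> 1" and E: "(W, x) \<in> phase P Q m" and E': "(W', x) \<in> phase P Q m"
    and agree: "\<forall>i k. k < n \<longrightarrow> W' i k = W i k"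
  shows "dE P Q m (W, x) (W', x) \<le> real m * 2 ^ P * (1/2) ^ n"
proof -
  have tail: "(\<Sum>k. \<bar>W i k - W' i k\<bar> / 2 ^ ((P + Q) * Suc k)) \<le> 2 ^ P * (1/2) ^ n"
    if "i < m" for i
  proof (rule suminf_le_geometric_tail)
    fix k
    have "W i k \<in> fxD P Q" "W' i k \<in> fxD P Q" using E E' \<open>i < m\<close> by (auto simp: phase_def)
    then have "\<bar>W i k - W' i k\<bar> \<le> 2 ^ P"
      using fxD_bounds[of "W i k" P Q] fxD_bounds[of "W' i k" P Q] by (simp add: abs_le_iff)
    moreover have "(2::real) ^ Suc k \<le> 2 ^ ((P + Q) * Suc k)"
      using mult_le_mono1[OF assms(1), of "Suc k"] by (intro power_increasing) simp_all
    ultimately have "\<bar>W i k - W' i k\<bar> / 2 ^ ((P + Q) * Suc k) \<le> 2 ^ P / 2 ^ Suc k"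
      by (intro frac_le) auto
    then show "\<bar>W i k - W' i k\<bar> / 2 ^ ((P + Q) * Suc k) \<le> 2 ^ P * (1/2) ^ Suc k"
      by (simp add: power_one_over field_simps)
  qed (simp_all add: agree)
  have "dE P Q m (W, x) (W', x) = (\<Sum>i<m. \<Sum>k. \<bar>W i k - W' i k\<bar> / 2 ^ ((P + Q) * Suc k))"
    by (simp add: dE_def)
  also have "\<dots> \<le> (\<Sum>i<m. 2 ^ P * (1/2) ^ n)" by (rule sum_mono, rule tail) simp
  finally show ?thesis by simp
qed

theorem theorem1:
  fixes P Q m :: nat and F :: "nat \<Rightarrow> (nat \<Rightarrow> real) \<Rightarrow> real"
  assumes "m \<ge> 1" and "P + Q \<ge> 1"
    and "\<forall>i<m. \<forall>x\<in>fxDm P Q m. F i x \<in> fxD P Q"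
    and "strongly_connected_sn P Q m F"
  shows "\<forall>E\<in>phase P Q m. \<forall>\<epsilon>>0. \<exists>E'\<in>phase P Q m. \<exists>k\<ge>1.
           (GF P Q m F ^^ k) E' = E' \<and> dE P Q m E E' < \<epsilon>"
proof (intro ballI allI impI)
  fix E and \<epsilon> :: real
  assume E: "E \<in> phase P Q m" and "\<epsilon> > 0"
  obtain W x where Wx: "E = (W, x)" by (cases E)
  define B :: real where "B = real m * 2 ^ P"
  have "B > 0" using assms(1) by (simp add: B_def)
  then obtain n0 where "(1/2::real) ^ n0 < \<epsilon> / B"
    using real_arch_pow_inv[of "\<epsilon> / B" "1/2"] \<open>\<epsilon> > 0\<close> by auto
  moreover have "(1/2::real) ^ Suc n0 \<le> (1/2) ^ n0" by (simp add: power_decreasing)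
  ultimately have small: "B * (1/2) ^ Suc n0 < \<epsilon>" using \<open>B > 0\<close> by (simp add: field_simps)
  obtain W' T where "T \<ge> 1" and E': "(W', x) \<in> phase P Q m"
    and "(GF P Q m F ^^ T) (W', x) = (W', x)" and "\<forall>i k. k < Suc n0 \<longrightarrow> W' i k = W i k"
    using periodic_point_with_prefix[OF assms(3,4), of W x "Suc n0"] E Wx by blast
  moreover have "dE P Q m E (W', x) < \<epsilon>"
    using dE_le_if_prefix_agrees[OF assms(2) E[unfolded Wx] E' calculation(4)] small
    by (simp add: Wx B_def)
  ultimately show "\<exists>E'\<in>phase P Q m. \<exists>k\<ge>1. (GF P Q m F ^^ k) E' = E' \<and> dE P Q m E E' < \<epsilon>"
    by blast
qed

end
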